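(* Let $x,y\in S^1\cap\mathbb{H}^2$ be distinct, with $\{x_*,y_*\}=\{-1,1\}$ labelled so that $x_*,x,y,y_*$ occur in this order on the upper unit semicircle. Suppose the line $L(x,y)$ meets the real axis, at the point $w$, and let $v=L(x,x_* )\cap L(y,y_* )$. Let $S^1(a,r_a)$ be the circle through $x,y$ orthogonal to $S^1$, with $a=i\frac{y(1+|x|^2)-x(1+|y|^2)}{2(x_2y_1-x_1y_2)}$ (where $x=x_1+ix_2$, $y=y_1+iy_2$) and $r_a=\sqrt{|a|^2-1}$. Let $z$ be the point of $S^1\cap S^1(\frac w2,\frac{|w|}{2})$ in $\mathbb{H}^2$, let $n$ be the point of $L(x,y)\cap S^1(\frac w2,\frac{|w|}{2})$ in $\mathbb{H}^2$, let $\{s,t\}=S^1(a,r_a)\cap S^1(\frac w2,\frac{|w|}{2})$, and let $u=L(a)\cap L(x,y)$. Then: (1) $z$ is the hyperbolic midpoint of the hyperbolic segment $J[x,y]$; (2) $n$ is the midpoint of the Euclidean segment $[x,y]$; (3) $v$ lies on the circle $S^1(a,r_a)$; (4) the circle $S^1(a,r_a)$ is orthogonal to the circle $S^1(\frac w2,\frac{|w|}{2})$; (5) $u$ lies on the line $L(s,t)$.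
   Context: $\mathbb{H}^2$ is the upper half plane with boundary the real axis; $S^1$ is the unit circle; $S^1(c,r)$ is the circle with centre $c$ and radius $r$. $L(p,q)$ denotes the line through $p,q$ and $L(p)$ the line through $p$ orthogonal to the real axis. The hyperbolic distance on $\mathbb{H}^2$ satisfies $\cosh\rho(x,y)=1+\frac{|x-y|^2}{2\operatorname{Im}x\operatorname{Im}y}$; $J[x,y]$ is the arc of $S^1$ between $x,y$, and its hyperbolic midpoint is the $z\in J[x,y]$ with $\rho(x,z)=\rho(z,y)$. *)

theory Defs
  imports "HOL-Analysis.Analysis"
begin

definition H2 :: "complex set" where
  "H2 = {z. Im z > 0}"

definition hdist :: "complex \<Rightarrow> complex \<Rightarrow> real" where
  "hdist p q = arcosh (1 + (cmod (p - q))\<^sup>2 / (2 * Im p * Im q))"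

definition line2 :: "complex \<Rightarrow> complex \<Rightarrow> complex set" where
  "line2 p q = {p + complex_of_real r * (q - p) | r. True}"

definition vline :: "complex \<Rightarrow> complex set" where
  "vline p = {z. Re z = Re p}"

definition J :: "complex \<Rightarrow> complex \<Rightarrow> complex set" where
  "J p q = {z. cmod z = 1 \<and> Im z > 0 \<and>
               min (Arg p) (Arg q) \<le> Arg z \<and> Arg z \<le> max (Arg p) (Arg q)}"

definition hyp_midpoint :: "complex \<Rightarrow> complex \<Rightarrow> complex \<Rightarrow> bool" where
  "hyp_midpoint p q z \<longleftrightarrow> z \<in> J p q \<and> hdist p z = hdist z q"

definition circles_orthogonal :: "complex \<Rightarrow> real \<Rightarrow> complex \<Rightarrow> real \<Rightarrow> bool" where
  "circles_orthogonal c1 r1 c2 r2 \<longleftrightarrow>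
     sphere c1 r1 \<inter> sphere c2 r2 \<noteq> {} \<and>
     (\<forall>p \<in> sphere c1 r1 \<inter> sphere c2 r2. (p - c1) \<bullet> (p - c2) = 0)"

end

theory Submission
  imports Defs
begin

text \<open>Everything is governed by the pole a of the chord L(x,y) with respect to S^1:
  L(x,y) is the line p \<bullet> a = 1, the circle S^1(a,r_a) is |p|^2 - 2 p \<bullet> a + 1 = 0, and
  S^1(w/2,|w|/2) is the Thales circle |p|^2 = p \<bullet> w over [0,w].  As w is real and w \<bullet> a = 1,
  the points z (where z \<bullet> w = |z|^2 = 1) and u both have real part Re a; this balances the two
  hyperbolic distances from z, and puts u on the radical axis p \<bullet> (2a - w) = 1 of the two circles,
  which is the line L(s,t).  Orthogonality is |a - w/2|^2 = r_a^2 + |w|^2/4, again from w \<bullet> a = 1.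
  The point n is the foot of the perpendicular from 0 to the chord, hence its midpoint.  For v,
  the power of a point p = x + r(e - x) on the secant through x and e = \<plusminus>1 equals
  2r(p \<bullet> e - a \<bullet> e); comparing the two secants forces Re v = Re a unless v = x.\<close>

lemma dist_sq_expand:
  fixes p c :: "'a::real_inner"
  shows "(dist p c)\<^sup>2 = (norm p)\<^sup>2 - 2 * (p \<bullet> c) + (norm c)\<^sup>2"
  by (simp add: dist_norm power2_norm_eq_inner inner_diff inner_commute)

lemma mem_sphere_iff_dist_sq:
  fixes p c :: "'a::real_inner"
  assumes "r \<ge> 0"
  shows "p \<in> sphere c r \<longleftrightarrow> (dist p c)\<^sup>2 = r\<^sup>2"
  using assms by (auto simp: dist_commute power2_eq_iff_nonneg)

lemma sphere_orthogonal_to_unit_circle_iff: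
  fixes a p :: "'a::real_inner"
  assumes "norm a \<ge> 1"
  shows "p \<in> sphere a (sqrt ((norm a)\<^sup>2 - 1)) \<longleftrightarrow> (norm p)\<^sup>2 - 2 * (p \<bullet> a) + 1 = 0"
proof -
  have "1 \<le> (norm a)\<^sup>2" using assms by (simp add: one_le_power)
  then show ?thesis
    by (subst mem_sphere_iff_dist_sq) (auto simp: dist_sq_expand)
qed

lemma sphere_on_diameter_iff:
  fixes p w :: complex
  shows "p \<in> sphere (w / 2) (cmod w / 2) \<longleftrightarrow> (cmod p)\<^sup>2 = p \<bullet> w"
proof -
  have "p \<bullet> (w / 2) = (p \<bullet> w) / 2" by (simp add: inner_complex_def)
  then have "(dist p (w / 2))\<^sup>2 = (cmod p)\<^sup>2 - p \<bullet> w + (cmod w / 2)\<^sup>2"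
    by (simp add: dist_sq_expand power_divide norm_divide)
  then show ?thesis by (subst mem_sphere_iff_dist_sq) auto
qed

lemma circles_orthogonalI:
  assumes "sphere c1 r1 \<inter> sphere c2 r2 \<noteq> {}" and "(dist c1 c2)\<^sup>2 = r1\<^sup>2 + r2\<^sup>2"
  shows "circles_orthogonal c1 r1 c2 r2"
  unfolding circles_orthogonal_def
proof (intro conjI ballI assms(1))
  fix p assume "p \<in> sphere c1 r1 \<inter> sphere c2 r2"
  then have "dist c1 p = r1" "dist c2 p = r2" by auto
  then show "(p - c1) \<bullet> (p - c2) = 0"
    using assms(2) by (simp add: dot_norm_neg dist_norm norm_minus_commute)
qed

lemma inner_eq_on_line2:
  fixes x y p a :: complex
  assumes "x \<bullet> a = c" "y \<bullet> a = c" "p \<in> line2 x y"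
  shows "p \<bullet> a = c"
proof -
  obtain r where "p = x + of_real r * (y - x)" using assms(3) unfolding line2_def by blast
  then have p: "p = x + r *\<^sub>R (y - x)" by (simp add: scaleR_conv_of_real)
  have "p \<bullet> a = x \<bullet> a + r * (y \<bullet> a - x \<bullet> a)" unfolding p by (simp add: algebra_simps)
  then show ?thesis using assms(1,2) by simp
qed

lemma secant_power:
  fixes x e a :: "'a::real_inner" and r :: real
  assumes "norm x = 1" "norm e = 1" "x \<bullet> a = 1"
  defines "p \<equiv> x + r *\<^sub>R (e - x)"
  shows "(norm p)\<^sup>2 - 2 * (p \<bullet> a) + 1 = 2 * r * (p \<bullet> e - a \<bullet> e)"
proof -
  have "x \<bullet> x = 1" "e \<bullet> e = 1"
    using assms(1,2) by (simp_all add: power2_norm_eq_inner[symmetric])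
  then show ?thesis using assms(3) unfolding p_def power2_norm_eq_inner
    by (simp add: inner_diff inner_commute algebra_simps power2_eq_square)
qed

lemma mem_line2_iff: "p \<in> line2 x y \<longleftrightarrow> (\<exists>r. p = x + r *\<^sub>R (y - x))"
  by (simp add: line2_def scaleR_conv_of_real)

lemma mem_line2_if_inner_eq:
  fixes s t u d :: complex
  assumes "s \<bullet> d = 1" "t \<bullet> d = 1" "u \<bullet> d = 1" "s \<noteq> t"
  shows "u \<in> line2 s t"
proof -
  define p q where "p = u - s" and "q = t - s"
  have pd: "p \<bullet> d = 0" and qd: "q \<bullet> d = 0"
    using assms(1-3) by (simp_all add: p_def q_def inner_diff_left)
  have "d \<noteq> 0" using assms(1) by auto
  moreover have "Re d * (Re p * Im q - Im p * Re q) = Im q * (p \<bullet> d) - Im p * (q \<bullet> d)"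
    and "Im d * (Re p * Im q - Im p * Re q) = Re p * (q \<bullet> d) - Re q * (p \<bullet> d)"
    by (simp_all add: inner_complex_def algebra_simps)
  ultimately have cross: "Re p * Im q = Im p * Re q" using pd qd by (auto simp: complex_eq_iff)
  have q0: "(Re q)\<^sup>2 + (Im q)\<^sup>2 \<noteq> 0" using assms(4) by (auto simp: q_def complex_eq_iff)
  define r where "r = (p \<bullet> q) / (q \<bullet> q)"
  have "p = r *\<^sub>R q"
  proof (rule complex_eqI)
    show "Re p = Re (r *\<^sub>R q)" "Im p = Im (r *\<^sub>R q)"
      using q0 cross by (simp_all add: r_def inner_complex_def field_simps power2_eq_square)
  qed
  then show ?thesis unfolding mem_line2_iff by (metis p_def q_def add.commute diff_add_cancel)
qed

lemma unit_H2_cross_nonzero: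
  assumes "x \<in> sphere 0 1 \<inter> H2" "y \<in> sphere 0 1 \<inter> H2" "x \<noteq> y"
  shows "Im x * Re y - Re x * Im y \<noteq> 0"
proof
  assume "Im x * Re y - Re x * Im y = 0"
  moreover have "Im x > 0" "Im y > 0" using assms(1,2) by (simp_all add: H2_def)
  ultimately have "x = of_real (Im x / Im y) * y" by (simp add: complex_eq_iff field_simps)
  moreover have "cmod x = 1" "cmod y = 1" using assms(1,2) by simp_all
  ultimately have "Im x / Im y = 1" using \<open>Im x > 0\<close> \<open>Im y > 0\<close>
    by (metis abs_of_pos divide_pos_pos mult_1_right norm_mult norm_of_real)
  then show False using \<open>x = _\<close> assms(3) by simp
qed

lemma pole_inner_eq_1:
  fixes x y a :: complex
  assumes "cmod x = 1" "cmod y = 1" and D: "Im x * Re y - Re x * Im y \<noteq> 0"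
    and a: "a = \<i> * (y * complex_of_real (1 + (cmod x)\<^sup>2) - x * complex_of_real (1 + (cmod y)\<^sup>2))
                   / complex_of_real (2 * (Im x * Re y - Re x * Im y))"
  shows "x \<bullet> a = 1" "y \<bullet> a = 1"
proof -
  have hx: "(Re x)\<^sup>2 + (Im x)\<^sup>2 = 1" and hy: "(Re y)\<^sup>2 + (Im y)\<^sup>2 = 1"
    using assms(1,2) by (simp_all add: cmod_power2[symmetric])
  have "a = (2 * (\<i> * (y - x))) / (2 * of_real (Im x * Re y - Re x * Im y))"
    using a assms(1,2) by (simp add: algebra_simps)
  then have "a = \<i> * (y - x) / of_real (Im x * Re y - Re x * Im y)"
    by (metis mult_divide_mult_cancel_left zero_neq_numeral)
  then have "Re a = (Im x - Im y) / (Im x * Re y - Re x * Im y)"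
        and "Im a = (Re y - Re x) / (Im x * Re y - Re x * Im y)"
    by (simp_all add: Re_divide_of_real Im_divide_of_real)
  then show "x \<bullet> a = 1" "y \<bullet> a = 1"
    using D hx hy by (simp_all add: inner_complex_def field_simps power2_eq_square) algebra+
qed

lemma hdist_eq_hdistI:
  assumes "Im x > 0" "Im y > 0" "Im z > 0"
    and "(cmod (x - z))\<^sup>2 * Im y = (cmod (z - y))\<^sup>2 * Im x"
  shows "hdist x z = hdist z y"
proof -
  have "(cmod (x - z))\<^sup>2 / (2 * Im x * Im z) = (cmod (z - y))\<^sup>2 / (2 * Im z * Im y)"
    using assms by (simp add: frac_eq_eq)
  then show ?thesis by (simp add: hdist_def)
qed

lemma Arg_eq_arccos_Re:
  assumes "cmod z = 1" "Im z > 0"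
  shows "Arg z = arccos (Re z)"
proof -
  have "z \<noteq> 0" using assms by auto
  then have "cos (Arg z) = Re z" using assms by (simp add: cos_Arg)
  moreover have "0 \<le> Arg z" "Arg z \<le> pi" using assms Arg_lt_pi[of z] by auto
  ultimately show ?thesis by (metis arccos_cos)
qed

lemma mem_J_if_Re_between:
  assumes "x \<in> sphere 0 1 \<inter> H2" "y \<in> sphere 0 1 \<inter> H2" "z \<in> sphere 0 1 \<inter> H2"
    and "(Re z - Re x) * (Re z - Re y) \<le> 0"
  shows "z \<in> J x y"
proof -
  have Arg: "Arg p = arccos (Re p)" and bounds: "-1 \<le> Re p" "Re p \<le> 1"
    if "p \<in> sphere 0 1 \<inter> H2" for p
    using that Arg_eq_arccos_Re[of p] abs_Re_le_cmod[of p] by (auto simp: H2_def abs_le_iff)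
  have "Re x \<le> Re z \<and> Re z \<le> Re y \<or> Re y \<le> Re z \<and> Re z \<le> Re x"
    using assms(4) by (auto simp: mult_le_0_iff)
  then have "min (Arg x) (Arg y) \<le> Arg z \<and> Arg z \<le> max (Arg x) (Arg y)"
    using arccos_le_arccos bounds[OF assms(1)] bounds[OF assms(2)] bounds[OF assms(3)]
    unfolding Arg[OF assms(1)] Arg[OF assms(2)] Arg[OF assms(3)] by (smt (verit))
  then show ?thesis using assms(3) by (simp add: J_def H2_def)
qed

lemma pole_Re_mult_cross:
  assumes "x \<bullet> a = 1" "y \<bullet> a = 1"
  shows "(Im x * Re y - Re x * Im y) * Re a = Im x - Im y"
proof -
  have "(Im x * Re y - Re x * Im y) * Re a = Im x * (y \<bullet> a) - Im y * (x \<bullet> a)"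
    by (simp add: inner_complex_def algebra_simps)
  then show ?thesis using assms by simp
qed

lemma pole_Re_between:
  assumes x: "x \<in> sphere 0 1 \<inter> H2" and y: "y \<in> sphere 0 1 \<inter> H2" and "x \<noteq> y"
    and "x \<bullet> a = 1" "y \<bullet> a = 1"
  shows "(Re a - Re x) * (Re a - Re y) \<le> 0"
proof -
  define D where "D = Im x * Re y - Re x * Im y"
  have hx: "(Re x)\<^sup>2 + (Im x)\<^sup>2 = 1" and hy: "(Re y)\<^sup>2 + (Im y)\<^sup>2 = 1"
    using x y by (simp_all add: cmod_power2[symmetric])
  have DRe: "D * Re a = Im x - Im y" using pole_Re_mult_cross assms(4,5) by (simp add: D_def)
  have "D * (Re a - Re x) = Im x * (1 - x \<bullet> y) + Im y * ((Re x)\<^sup>2 + (Im x)\<^sup>2 - 1)"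
    using DRe by (simp add: D_def inner_complex_def algebra_simps power2_eq_square)
  with hx have ax: "D * (Re a - Re x) = Im x * (1 - x \<bullet> y)" by simp
  have "D * (Re a - Re y) = - Im y * (1 - x \<bullet> y) - Im x * ((Re y)\<^sup>2 + (Im y)\<^sup>2 - 1)"
    using DRe by (simp add: D_def inner_complex_def algebra_simps power2_eq_square)
  with hy have ay: "D * (Re a - Re y) = - Im y * (1 - x \<bullet> y)" by simp
  have "D\<^sup>2 * ((Re a - Re x) * (Re a - Re y)) = (D * (Re a - Re x)) * (D * (Re a - Re y))"
    by (simp add: power2_eq_square algebra_simps)
  also have "\<dots> = - (Im x * Im y) * (1 - x \<bullet> y)\<^sup>2"
    unfolding ax ay by (simp add: power2_eq_square algebra_simps)
  also have "\<dots> \<le> 0" using x y by (simp add: H2_def)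
  finally show ?thesis
    using unit_H2_cross_nonzero[OF x y \<open>x \<noteq> y\<close>] by (simp add: D_def mult_le_0_iff)
qed

lemma hyp_midpoint_if_Re_eq_Re_pole:
  assumes x: "x \<in> sphere 0 1 \<inter> H2" and y: "y \<in> sphere 0 1 \<inter> H2"
    and z: "z \<in> sphere 0 1 \<inter> H2" and "x \<noteq> y"
    and pole: "x \<bullet> a = 1" "y \<bullet> a = 1" and "Re z = Re a"
  shows "hyp_midpoint x y z"
proof -
  have unit_dist: "(cmod (p - q))\<^sup>2 = 2 - 2 * (p \<bullet> q)"
    if "cmod p = 1" "cmod q = 1" for p q :: complex
    using that dist_sq_expand[of p q] by (simp add: dist_norm)
  have "(1 - x \<bullet> z) * Im y - (1 - z \<bullet> y) * Im x
      = Im y - Im x + (Im x * Re y - Re x * Im y) * Re z"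
    by (simp add: inner_complex_def algebra_simps)
  also have "\<dots> = 0" using pole_Re_mult_cross[OF pole] \<open>Re z = Re a\<close> by simp
  finally have balance: "(1 - x \<bullet> z) * Im y = (1 - z \<bullet> y) * Im x" by simp
  have "cmod x = 1" "cmod y = 1" "cmod z = 1" using x y z by simp_all
  then have "(cmod (x - z))\<^sup>2 = 2 * (1 - x \<bullet> z)" "(cmod (z - y))\<^sup>2 = 2 * (1 - z \<bullet> y)"
    using unit_dist[of x z] unit_dist[of z y] by simp_all
  then have "(cmod (x - z))\<^sup>2 * Im y = (cmod (z - y))\<^sup>2 * Im x"
    by (simp only: mult.assoc balance)
  then have "hdist x z = hdist z y" using x y z by (intro hdist_eq_hdistI) (auto simp: H2_def)
  moreover have "z \<in> J x y"
    using mem_J_if_Re_between[OF x y z] pole_Re_between[OF x y \<open>x \<noteq> y\<close> pole] \<open>Re z = Re a\<close>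
    by simp
  ultimately show ?thesis by (simp add: hyp_midpoint_def)
qed

lemma midpoint_if_on_circle_with_diameter:
  fixes x y n w :: complex
  assumes "cmod x = cmod y" "n \<in> line2 x y" "w \<in> line2 x y" "n \<noteq> w"
    and "n \<in> sphere (w / 2) (cmod w / 2)"
  shows "n = (x + y) / 2"
proof -
  obtain r r' where n: "n = x + r *\<^sub>R (y - x)" and w: "w = x + r' *\<^sub>R (y - x)"
    using assms(2,3) unfolding mem_line2_iff by blast
  have "r \<noteq> r'" using assms(4) n w by auto
  have "(r - r') * (n \<bullet> (y - x)) = n \<bullet> (n - w)"
    unfolding n w by (simp add: inner_diff_right algebra_simps)
  also have "\<dots> = 0"
    using assms(5) sphere_on_diameter_iff[of n w] by (simp add: inner_diff_right power2_norm_eq_inner)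
  finally have foot: "n \<bullet> (y - x) = 0" using \<open>r \<noteq> r'\<close> by simp
  have xx: "x \<bullet> x = y \<bullet> y" using assms(1) by (simp add: power2_norm_eq_inner[symmetric])
  have "n \<bullet> (y - x) = (x \<bullet> y - y \<bullet> y) + r * ((y - x) \<bullet> (y - x))"
    unfolding n using xx by (simp add: inner_diff inner_commute algebra_simps)
  moreover have "(y - x) \<bullet> (y - x) = 2 * (y \<bullet> y - x \<bullet> y)"
    using xx by (simp add: inner_diff inner_commute)
  ultimately have "(y - x) \<bullet> (y - x) * (2 * r - 1) = 0"
    using foot by (simp add: algebra_simps)
  then consider "x = y" | "r = 1 / 2" by auto
  then show ?thesis
  proof cases
    case 2
    show ?thesis unfolding n 2 by (simp add: scaleR_conv_of_real field_simps)
  qed (simp add: n)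
qed

lemma secants_through_diameter_meet_on_orthogonal_circle:
  fixes x y v a :: complex
  assumes "cmod x = 1" "cmod y = 1" "x \<bullet> a = 1" "y \<bullet> a = 1"
    and "v \<in> line2 x 1" "v \<in> line2 y (-1)"
  shows "(cmod v)\<^sup>2 - 2 * (v \<bullet> a) + 1 = 0"
proof -
  obtain r s where vx: "v = x + r *\<^sub>R (1 - x)" and vy: "v = y + s *\<^sub>R (-1 - y)"
    using assms(5,6) unfolding mem_line2_iff by blast
  have gx: "(cmod v)\<^sup>2 - 2 * (v \<bullet> a) + 1 = 2 * r * (Re v - Re a)"
    using secant_power[OF assms(1) _ assms(3), of 1 r] vx by simp
  have gy: "(cmod v)\<^sup>2 - 2 * (v \<bullet> a) + 1 = 2 * s * (Re a - Re v)"
    using secant_power[OF assms(2) _ assms(4), of "-1" s] vy by simp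
  show ?thesis
  proof (cases "r + s = 0")
    case True
    then have "s = - r" by simp
    then have "x + r *\<^sub>R (1 - x) = y - r *\<^sub>R (-1 - y)" using vx vy by simp
    then have "(1 - r) *\<^sub>R x = (1 + r) *\<^sub>R y" by (simp add: scaleR_conv_of_real algebra_simps)
    then have "\<bar>1 - r\<bar> = \<bar>1 + r\<bar>" using assms(1,2) by (metis norm_scaleR mult_1_right)
    then have "r = 0" by linarith
    then show ?thesis using gx by simp
  next
    case False
    have "2 * ((r + s) * (Re v - Re a)) = 2 * r * (Re v - Re a) - 2 * s * (Re a - Re v)"
      by (simp add: algebra_simps)
    also have "\<dots> = 0" using gx gy by simp
    finally have "Re v = Re a" using False by simp
    then show ?thesis using gx by simp
  qed
qed

theorem proposition3p7:
  fixes x y xs ys w v a z n s t u :: complex and ra :: real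
  assumes x_on: "x \<in> sphere 0 1 \<inter> H2" and y_on: "y \<in> sphere 0 1 \<inter> H2"
      and xy: "x \<noteq> y"
      and stars: "{xs, ys} = {-1, 1}"
      and order: "(Arg xs < Arg x \<and> Arg x < Arg y \<and> Arg y < Arg ys) \<or>
                  (Arg xs > Arg x \<and> Arg x > Arg y \<and> Arg y > Arg ys)"
      and w: "w \<in> \<real>" "w \<in> line2 x y"
      and v: "v \<in> line2 x xs \<inter> line2 y ys"
      and a: "a = \<i> * (y * complex_of_real (1 + (cmod x)\<^sup>2) - x * complex_of_real (1 + (cmod y)\<^sup>2))
                   / complex_of_real (2 * (Im x * Re y - Re x * Im y))"
      and ra: "ra = sqrt ((cmod a)\<^sup>2 - 1)"
      and z: "z \<in> sphere 0 1 \<inter> sphere (w / 2) (cmod w / 2) \<inter> H2"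
      and n: "n \<in> line2 x y \<inter> sphere (w / 2) (cmod w / 2) \<inter> H2"
      and st: "s \<noteq> t" "{s, t} = sphere a ra \<inter> sphere (w / 2) (cmod w / 2)"
      and u: "u \<in> vline a \<inter> line2 x y"
  shows "hyp_midpoint x y z \<and> n = (x + y) / 2 \<and> v \<in> sphere a ra \<and>
         circles_orthogonal a ra (w / 2) (cmod w / 2) \<and> u \<in> line2 s t"
proof -
  \<comment> \<open>The hypothesis order only fixes the labelling of xs and ys; (3) holds for either one.\<close>
  have unit: "cmod x = 1" "cmod y = 1" using x_on y_on by simp_all
  have pole: "x \<bullet> a = 1" "y \<bullet> a = 1"
    using pole_inner_eq_1[OF unit unit_H2_cross_nonzero[OF x_on y_on xy] a] by simp_all
  have "1 \<le> cmod a" using norm_cauchy_schwarz[of x a] pole unit by simp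
  then have on_a: "p \<in> sphere a ra \<longleftrightarrow> (cmod p)\<^sup>2 - 2 * (p \<bullet> a) + 1 = 0" for p
    unfolding ra by (rule sphere_orthogonal_to_unit_circle_iff)
  have Im_w: "Im w = 0" using w(1) by (simp add: complex_is_Real_iff)
  then have inner_w: "p \<bullet> w = Re p * Re w" for p by (simp add: inner_complex_def)
  have wa: "w \<bullet> a = 1" using inner_eq_on_line2[OF pole w(2)] .
  have "z \<bullet> w = 1" using z sphere_on_diameter_iff[of z w] by simp
  then have "Re z = Re a"
    using wa inner_w[of z] inner_w[of a]
    by (metis inner_commute mult_cancel_right mult_zero_left zero_neq_one)
  then have P1: "hyp_midpoint x y z"
    using hyp_midpoint_if_Re_eq_Re_pole[OF x_on y_on _ xy pole] z by blast
  have "n \<noteq> w" using n Im_w by (auto simp: H2_def)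
  then have P2: "n = (x + y) / 2"
    using midpoint_if_on_circle_with_diameter[OF _ _ w(2)] n unit by simp
  have "(xs = 1 \<and> ys = -1) \<or> (xs = -1 \<and> ys = 1)" using stars by (auto simp: doubleton_eq_iff)
  then have P3: "v \<in> sphere a ra"
    using secants_through_diameter_meet_on_orthogonal_circle[OF unit pole, of v]
      secants_through_diameter_meet_on_orthogonal_circle[OF unit(2,1) pole(2,1), of v] v on_a by auto
  have s_in: "s \<in> sphere a ra \<inter> sphere (w / 2) (cmod w / 2)" using st(2) by blast
  have "(dist a (w / 2))\<^sup>2 = ra\<^sup>2 + (cmod w / 2)\<^sup>2"
    using wa \<open>1 \<le> cmod a\<close>
    by (simp add: ra dist_sq_expand inner_complex_def power_divide norm_divide algebra_simps)
  then have P4: "circles_orthogonal a ra (w / 2) (cmod w / 2)"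
    using s_in by (intro circles_orthogonalI) auto
  have radical: "p \<bullet> (2 * a - w) = 1" if "p \<in> sphere a ra \<inter> sphere (w / 2) (cmod w / 2)" for p
    using that on_a[of p] sphere_on_diameter_iff[of p w]
    by (simp add: inner_complex_def algebra_simps)
  have "u \<bullet> (2 * a - w) = 1"
    using u inner_eq_on_line2[OF pole, of u] wa Im_w
    by (simp add: vline_def inner_complex_def algebra_simps)
  then have P5: "u \<in> line2 s t" using mem_line2_if_inner_eq radical st by blast
  show ?thesis using P1 P2 P3 P4 P5 by blast
qed

end
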